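(* Let $K$ be a field of characteristic $p>0$ such that $K/k$ is a finitely generated field extension, where $k=\bigcap_{n\ge0}K^{p^n}$. There is a bijection between power towers on $K$ and $K$-subalgebras $\mathcal{D}$ with $K\subseteq\mathcal{D}\subseteq\operatorname{Diff}_k(K)$, given by $W_\bullet\mapsto\operatorname{Diff}_{W_\bullet}(K):=\bigcup_{n\ge0}\operatorname{Diff}_{W_n}(K)$, with inverse $\mathcal{D}\mapsto(W_n)_{n\ge 0}$, $W_n=\{x\in K: xE=Ex\ \forall E\in\mathcal{D}_n\}$, where $\mathcal{D}_n=\mathcal{D}\cap\operatorname{Diff}_{K^{p^n}}(K)$. Moreover, $\dim_K(\mathcal{D}_i)=\dim_{W_i}(K)$ for all $i\ge 0$.
   Context: A power tower on $K$ is a sequence of subfields $W_0,W_1,\ldots$ of $K$ with $W_j=W_i\cdot K^{p^j}$ whenever $j\le i$ ($\cdot$ = compositum in $K$). For subfields $A\subseteq B$, $\operatorname{Diff}_A(B)$ is the union over $n\ge0$ of the sets of $A$-linear maps $D:B\to B$ with $[b_0,[b_1,[\ldots,[b_n,D]\ldots]]]=0$ for all $b_i\in B$ (elements of $B$ acting by multiplication, $[X,Y]=XY-YX$); it is a subalgebra of $\operatorname{End}_A(B)$ containing $B$. *)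

theory Defs
  imports Main "HOL-Library.Function_Algebras"
begin

text \<open>Throughout, the field K is the type 'a (so K = UNIV), and subfields of K are sets.\<close>

definition subfield :: "'a::field set \<Rightarrow> bool" where
  "subfield S \<longleftrightarrow> 0 \<in> S \<and> 1 \<in> S \<and>
     (\<forall>x\<in>S. \<forall>y\<in>S. x + y \<in> S \<and> x - y \<in> S \<and> x * y \<in> S) \<and>
     (\<forall>x\<in>S. inverse x \<in> S)"

definition gen_field :: "'a::field set \<Rightarrow> 'a set" where
  "gen_field A = \<Inter>{F. subfield F \<and> A \<subseteq> F}"

definition compositum :: "'a::field set \<Rightarrow> 'a set \<Rightarrow> 'a set" where
  "compositum A B = gen_field (A \<union> B)"

definition frob_pow :: "nat \<Rightarrow> nat \<Rightarrow> 'a::field set" where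
  "frob_pow p n = range (\<lambda>x::'a. x ^ (p ^ n))"

definition perfect_core :: "nat \<Rightarrow> 'a::field set" where
  "perfect_core p = (\<Inter>n. frob_pow p n)"

definition fin_gen_over :: "'a::field set \<Rightarrow> bool" where
  "fin_gen_over k \<longleftrightarrow> (\<exists>S. finite S \<and> gen_field (k \<union> S) = UNIV)"

definition power_tower :: "nat \<Rightarrow> (nat \<Rightarrow> 'a::field set) \<Rightarrow> bool" where
  "power_tower p W \<longleftrightarrow> (\<forall>i. subfield (W i)) \<and>
     (\<forall>i j. j \<le> i \<longrightarrow> W j = compositum (W i) (frob_pow p j))"

definition mult_op :: "'a::field \<Rightarrow> 'a \<Rightarrow> 'a" where
  "mult_op c = (\<lambda>x. c * x)"

definition comm_op :: "'a::field \<Rightarrow> ('a \<Rightarrow> 'a) \<Rightarrow> ('a \<Rightarrow> 'a)" where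
  "comm_op b D = (\<lambda>x. b * D x - D (b * x))"

fun diff_ord :: "nat \<Rightarrow> ('a::field \<Rightarrow> 'a) \<Rightarrow> bool" where
  "diff_ord 0 D = (\<forall>b. comm_op b D = 0)"
| "diff_ord (Suc n) D = (\<forall>b. diff_ord n (comm_op b D))"

definition linear_over :: "'a::field set \<Rightarrow> ('a \<Rightarrow> 'a) \<Rightarrow> bool" where
  "linear_over A D \<longleftrightarrow> (\<forall>x y. D (x + y) = D x + D y) \<and> (\<forall>a\<in>A. \<forall>x. D (a * x) = a * D x)"

definition Diff :: "'a::field set \<Rightarrow> ('a \<Rightarrow> 'a) set" where
  "Diff A = {D. linear_over A D \<and> (\<exists>n. diff_ord n D)}"

definition Diff_tower :: "(nat \<Rightarrow> 'a::field set) \<Rightarrow> ('a \<Rightarrow> 'a) set" where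
  "Diff_tower W = (\<Union>n. Diff (W n))"

definition K_subalgebra :: "('a::field \<Rightarrow> 'a) set \<Rightarrow> bool" where
  "K_subalgebra \<D> \<longleftrightarrow> (\<forall>c. mult_op c \<in> \<D>) \<and>
     (\<forall>E\<in>\<D>. \<forall>F\<in>\<D>. E + F \<in> \<D> \<and> E \<circ> F \<in> \<D>)"

definition D_level :: "nat \<Rightarrow> ('a::field \<Rightarrow> 'a) set \<Rightarrow> nat \<Rightarrow> ('a \<Rightarrow> 'a) set" where
  "D_level p \<D> n = \<D> \<inter> Diff (frob_pow p n)"

definition tower_of :: "nat \<Rightarrow> ('a::field \<Rightarrow> 'a) set \<Rightarrow> nat \<Rightarrow> 'a set" where
  "tower_of p \<D> n = {x. \<forall>E\<in>D_level p \<D> n. mult_op x \<circ> E = E \<circ> mult_op x}"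

definition span_over :: "'s set \<Rightarrow> ('s \<Rightarrow> 'v::comm_monoid_add \<Rightarrow> 'v) \<Rightarrow> 'v set \<Rightarrow> 'v set" where
  "span_over F sc B = {v. \<exists>S c. finite S \<and> S \<subseteq> B \<and> (\<forall>b\<in>S. c b \<in> F) \<and> v = (\<Sum>b\<in>S. sc (c b) b)}"

definition indep_over :: "'s::zero set \<Rightarrow> ('s \<Rightarrow> 'v::comm_monoid_add \<Rightarrow> 'v) \<Rightarrow> 'v set \<Rightarrow> bool" where
  "indep_over F sc B \<longleftrightarrow> (\<forall>S c. finite S \<and> S \<subseteq> B \<and> (\<forall>b\<in>S. c b \<in> F) \<and>
      (\<Sum>b\<in>S. sc (c b) b) = 0 \<longrightarrow> (\<forall>b\<in>S. c b = 0))"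

definition basis_over :: "'s::zero set \<Rightarrow> ('s \<Rightarrow> 'v::comm_monoid_add \<Rightarrow> 'v) \<Rightarrow> 'v set \<Rightarrow> 'v set \<Rightarrow> bool" where
  "basis_over F sc V B \<longleftrightarrow> B \<subseteq> V \<and> indep_over F sc B \<and> span_over F sc B = V"

text \<open>dim_{F1}(V1) = dim_{F2}(V2) as cardinals: there are bases of equal cardinality.\<close>
definition same_dim :: "'s::zero set \<Rightarrow> ('s \<Rightarrow> 'v::comm_monoid_add \<Rightarrow> 'v) \<Rightarrow> 'v set \<Rightarrow>
    't::zero set \<Rightarrow> ('t \<Rightarrow> 'w::comm_monoid_add \<Rightarrow> 'w) \<Rightarrow> 'w set \<Rightarrow> bool" where
  "same_dim F1 sc1 V1 F2 sc2 V2 \<longleftrightarrow> (\<exists>B1 B2 f. basis_over F1 sc1 V1 B1 \<and> basis_over F2 sc2 V2 B2 \<and>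
      bij_betw f B1 B2)"

end

theory Submission
  imports Defs "HOL-Computational_Algebra.Primes" "HOL-Library.Multiset"
begin

text \<open>
  Because \<open>K\<close> is finitely generated over \<open>k = \<Inter>n. K^(p^n)\<close>, it is finite-dimensional over
  every \<open>K^(p^n)\<close>. In characteristic \<open>p\<close> the commutator \<open>ad(h) = comm_op h\<close> satisfies
  \<open>ad(h)^(p^N) = ad(h^(p^N))\<close>, so a differential operator of order \<open>N\<close> is \<open>K^(p^N)\<close>-linear;
  conversely, expanding iterated commutators along a finite spanning set shows that every \<open>K^(p^n)\<close>-linear endomorphism is a differential operator.
  Hence \<open>Diff_W(K) = End_W(K)\<close> for every subfield \<open>W \<supseteq> K^(p^n)\<close>, and \<open>Diff_k(K)\<close> is the union
  of the \<open>End_{K^(p^n)}(K)\<close>. The centralizer of \<open>End_W(K)\<close> is \<open>W\<close>, and conversely, by the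
  Jacobson-Bourbaki density argument, every \<open>K\<close>-subalgebra of \<open>End_{K^(p^n)}(K)\<close> containing \<open>K\<close>
  is \<open>End_W(K)\<close> for its centralizer \<open>W\<close>. Both maps of the correspondence are therefore
  \<open>W\<^sub>n \<mapsto> End_{W\<^sub>n}(K)\<close> and taking centralizers levelwise, and \<open>dim_K End_W(K) = [K : W]\<close>
  via the coordinate functionals of a \<open>W\<close>-basis.
\<close>

section \<open>Linear algebra over a subfield\<close>

lemma subfieldD:
  assumes "subfield W"
  shows "0 \<in> W" "1 \<in> W" "x \<in> W \<Longrightarrow> y \<in> W \<Longrightarrow> x + y \<in> W"
    "x \<in> W \<Longrightarrow> y \<in> W \<Longrightarrow> x - y \<in> W" "x \<in> W \<Longrightarrow> y \<in> W \<Longrightarrow> x * y \<in> W"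
    "x \<in> W \<Longrightarrow> inverse x \<in> W"
  using assms unfolding subfield_def by auto

lemma subfield_uminus: "subfield W \<Longrightarrow> x \<in> W \<Longrightarrow> - x \<in> W"
  using subfieldD(4)[of W 0 x] subfieldD(1)[of W] by simp

lemma subfield_divide: "subfield W \<Longrightarrow> x \<in> W \<Longrightarrow> y \<in> W \<Longrightarrow> x / y \<in> W"
  by (simp add: divide_inverse subfieldD)

lemma subfield_Inter: "(\<And>F. F \<in> \<F> \<Longrightarrow> subfield F) \<Longrightarrow> subfield (\<Inter>\<F>)"
  unfolding subfield_def by blast

lemma subfield_gen_field: "subfield (gen_field A)"
  unfolding gen_field_def by (rule subfield_Inter) blast

lemma gen_field_upper: "A \<subseteq> gen_field A"
  unfolding gen_field_def by blast

lemma gen_field_least: "subfield F \<Longrightarrow> A \<subseteq> F \<Longrightarrow> gen_field A \<subseteq> F"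
  unfolding gen_field_def by blast

definition additive :: "('a::field \<Rightarrow> 'a) \<Rightarrow> bool" where
  "additive E \<longleftrightarrow> (\<forall>x y. E (x + y) = E x + E y)"

lemma additive_0: "additive E \<Longrightarrow> E 0 = 0"
  unfolding additive_def by (metis add_cancel_right_right)

lemma additive_diff: "additive E \<Longrightarrow> E (x - y) = E x - E y"
  by (metis additive_def diff_add_cancel add_diff_cancel)

lemma additive_sum: "additive E \<Longrightarrow> E (sum f S) = (\<Sum>i\<in>S. E (f i))"
  by (induction S rule: infinite_finite_induct) (auto simp: additive_0 additive_def)

definition linear_scalars :: "('a::field \<Rightarrow> 'a) \<Rightarrow> 'a set" where
  "linear_scalars E = {a. \<forall>x. E (a * x) = a * E x}"

lemma linear_over_iff: "linear_over A E \<longleftrightarrow> additive E \<and> A \<subseteq> linear_scalars E"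
  unfolding linear_over_def additive_def linear_scalars_def by blast

lemma linear_over_additive: "linear_over A E \<Longrightarrow> additive E"
  by (simp add: linear_over_iff)

lemma subfield_linear_scalars:
  assumes "additive E"
  shows "subfield (linear_scalars E)"
  unfolding subfield_def linear_scalars_def
proof (intro conjI ballI CollectI allI)
  fix x
  show "E (0 * x) = 0 * E x" "E (1 * x) = 1 * E x"
    using additive_0[OF assms] by simp_all
next
  fix a b x assume a: "a \<in> {a. \<forall>x. E (a * x) = a * E x}" and b: "b \<in> {a. \<forall>x. E (a * x) = a * E x}"
  show "E ((a + b) * x) = (a + b) * E x" "E ((a - b) * x) = (a - b) * E x"
    using a b assms by (simp_all add: distrib_right left_diff_distrib additive_def additive_diff)
  show "E ((a * b) * x) = (a * b) * E x"
    using a b by (simp add: mult.assoc)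
next
  fix a x assume a: "a \<in> {a. \<forall>x. E (a * x) = a * E x}"
  show "E (inverse a * x) = inverse a * E x"
  proof (cases "a = 0")
    case True
    then show ?thesis using additive_0[OF assms] by simp
  next
    case False
    have "a * E (inverse a * x) = E (a * (inverse a * x))" using a by simp
    also have "\<dots> = E x" using False by (simp add: mult.assoc[symmetric])
    finally show ?thesis using False by (simp add: field_simps)
  qed
qed

lemma linear_over_gen_field: "linear_over A E \<Longrightarrow> linear_over (gen_field A) E"
  by (simp add: linear_over_iff gen_field_least subfield_linear_scalars)

lemma linear_over_mono: "B \<subseteq> A \<Longrightarrow> linear_over A E \<Longrightarrow> linear_over B E"
  unfolding linear_over_def by blast

lemma linear_over_Un: "linear_over A E \<Longrightarrow> linear_over B E \<Longrightarrow> linear_over (A \<union> B) E"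
  unfolding linear_over_def by blast

lemma linear_over_comp: "linear_over A E \<Longrightarrow> linear_over A F \<Longrightarrow> linear_over A (E \<circ> F)"
  unfolding linear_over_def by simp

lemma linear_over_add: "linear_over A E \<Longrightarrow> linear_over A F \<Longrightarrow> linear_over A (E + F)"
  unfolding linear_over_def by (simp add: algebra_simps)

lemma linear_over_mult_op: "linear_over A (mult_op c)"
  unfolding linear_over_def mult_op_def by (simp add: algebra_simps)

lemma sum_fun_apply: "sum F S x = (\<Sum>i\<in>S. F i x)"
  by (induction S rule: infinite_finite_induct) auto

lemma linear_over_sum:
  "finite S \<Longrightarrow> (\<And>i. i \<in> S \<Longrightarrow> linear_over A (f i)) \<Longrightarrow> linear_over A (sum f S)"
proof (induction S rule: finite_induct)
  case empty
  show ?case by (simp add: linear_over_def)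
next
  case (insert x S)
  then show ?case by (simp add: linear_over_add[unfolded plus_fun_def])
qed

lemma linear_over_apply_sum:
  assumes "linear_over W E" "\<forall>b\<in>S. c b \<in> W"
  shows "E (\<Sum>b\<in>S. c b * b) = (\<Sum>b\<in>S. c b * E b)"
proof -
  have "E (\<Sum>b\<in>S. c b * b) = (\<Sum>b\<in>S. E (c b * b))"
    by (rule additive_sum[OF linear_over_additive[OF assms(1)]])
  also have "\<dots> = (\<Sum>b\<in>S. c b * E b)"
    using assms by (intro sum.cong) (auto simp: linear_over_def)
  finally show ?thesis .
qed

definition centralizer :: "('a::field \<Rightarrow> 'a) set \<Rightarrow> 'a set" where
  "centralizer X = (\<Inter>E\<in>X. linear_scalars E)"

lemma tower_of_eq_centralizer: "tower_of p \<D> n = centralizer (D_level p \<D> n)"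
  unfolding tower_of_def centralizer_def linear_scalars_def mult_op_def
  by (auto simp: fun_eq_iff)

lemma subfield_centralizer: "(\<And>E. E \<in> X \<Longrightarrow> additive E) \<Longrightarrow> subfield (centralizer X)"
  unfolding centralizer_def by (rule subfield_Inter) (auto intro: subfield_linear_scalars)

lemma linear_over_centralizer: "additive E \<Longrightarrow> E \<in> X \<Longrightarrow> linear_over (centralizer X) E"
  unfolding linear_over_iff centralizer_def by blast

abbreviation End_over :: "'a::field set \<Rightarrow> ('a \<Rightarrow> 'a) set" where
  "End_over W \<equiv> {E. linear_over W E}"

text \<open>
  Spans and independence refer to a finite family \<open>M\<close> of vectors with one coefficient each;
  for infinite \<open>M\<close> the sums are \<open>0\<close> and the notions degenerate.
\<close>

definition fspan :: "'a::field set \<Rightarrow> 'a set \<Rightarrow> 'a set" where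
  "fspan W M = {v. \<exists>c. (\<forall>b\<in>M. c b \<in> W) \<and> v = (\<Sum>b\<in>M. c b * b)}"

definition subspace_over :: "'a::field set \<Rightarrow> 'a set \<Rightarrow> bool" where
  "subspace_over W X \<longleftrightarrow>
     0 \<in> X \<and> (\<forall>x\<in>X. \<forall>y\<in>X. x + y \<in> X) \<and> (\<forall>w\<in>W. \<forall>x\<in>X. w * x \<in> X)"

lemma subspace_over_sum:
  assumes "subspace_over W X" "finite M" "\<forall>b\<in>M. f b \<in> X"
  shows "sum f M \<in> X"
  using assms(2,3)
  by (induction M rule: finite_induct) (use assms(1) in \<open>auto simp: subspace_over_def\<close>)

lemma subspace_over_preimage: "subspace_over W X \<Longrightarrow> subspace_over W {v. a * v \<in> X}"
  unfolding subspace_over_def by (auto simp: distrib_left mult.left_commute)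

lemma fspan_least:
  assumes "finite M" "subspace_over W X" "M \<subseteq> X"
  shows "fspan W M \<subseteq> X"
proof
  fix v assume "v \<in> fspan W M"
  then obtain c where c: "\<forall>b\<in>M. c b \<in> W" "v = (\<Sum>b\<in>M. c b * b)"
    by (auto simp: fspan_def)
  show "v \<in> X" unfolding c(2)
    by (rule subspace_over_sum[OF assms(2,1)])
      (use c(1) assms(2,3) in \<open>auto simp: subspace_over_def\<close>)
qed

lemma subspace_over_fspan:
  assumes "subfield W"
  shows "subspace_over W (fspan W M)"
  unfolding subspace_over_def
proof (intro conjI ballI)
  show "0 \<in> fspan W M" unfolding fspan_def
    by (intro CollectI exI[of _ "\<lambda>_. 0"]) (use assms in \<open>auto intro: subfieldD\<close>)
next
  fix x y assume "x \<in> fspan W M" "y \<in> fspan W M"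
  then obtain c d where "\<forall>b\<in>M. c b \<in> W" "x = (\<Sum>b\<in>M. c b * b)"
    "\<forall>b\<in>M. d b \<in> W" "y = (\<Sum>b\<in>M. d b * b)"
    by (auto simp: fspan_def)
  then show "x + y \<in> fspan W M" unfolding fspan_def
    by (intro CollectI exI[of _ "\<lambda>b. c b + d b"])
      (auto simp: sum.distrib distrib_right intro: subfieldD[OF assms])
next
  fix w x assume "w \<in> W" "x \<in> fspan W M"
  then obtain c where "\<forall>b\<in>M. c b \<in> W" "x = (\<Sum>b\<in>M. c b * b)"
    by (auto simp: fspan_def)
  then show "w * x \<in> fspan W M" unfolding fspan_def using \<open>w \<in> W\<close>
    by (intro CollectI exI[of _ "\<lambda>b. w * c b"])
      (auto simp: sum_distrib_left mult.assoc intro: subfieldD[OF assms])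
qed

lemma fspan_base:
  assumes "subfield W" "finite M" "b \<in> M"
  shows "b \<in> fspan W M"
  unfolding fspan_def
proof (intro CollectI exI[of _ "\<lambda>x. if x = b then 1 else 0"] conjI)
  show "\<forall>x\<in>M. (if x = b then 1 else 0) \<in> W" using subfieldD[OF assms(1)] by auto
  have "(\<Sum>x\<in>M. (if x = b then 1 else 0) * x) = (\<Sum>x\<in>M. if x = b then x else 0)"
    by (rule sum.cong) auto
  then show "b = (\<Sum>x\<in>M. (if x = b then 1 else 0) * x)" using assms(2,3) by simp
qed

lemma fspan_mono:
  assumes "subfield W" "finite M'" "M \<subseteq> M'"
  shows "fspan W M \<subseteq> fspan W M'"
  using assms finite_subset[OF assms(3,2)] subspace_over_fspan[OF assms(1)]
    fspan_base[OF assms(1,2)]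
  by (intro fspan_least) auto

lemma fspan_mono_scalars: "W \<subseteq> W' \<Longrightarrow> fspan W M \<subseteq> fspan W' M"
  unfolding fspan_def by blast

lemma fspan_insert:
  assumes W: "subfield W" and S: "finite S" and z: "z \<in> fspan W S" and w: "w \<in> W"
  shows "z + w * u \<in> fspan W (insert u S)"
proof -
  have sp: "subspace_over W (fspan W (insert u S))" using subspace_over_fspan[OF W] .
  have "z \<in> fspan W (insert u S)" using fspan_mono[OF W, of "insert u S" S] S z by auto
  moreover have "u \<in> fspan W (insert u S)" using fspan_base[OF W] S by simp
  ultimately show ?thesis using sp w unfolding subspace_over_def by blast
qed

definition findep :: "'a::field set \<Rightarrow> 'a set \<Rightarrow> bool" where
  "findep W B \<longleftrightarrow>
     (\<forall>c. (\<forall>b\<in>B. c b \<in> W) \<and> (\<Sum>b\<in>B. c b * b) = 0 \<longrightarrow> (\<forall>b\<in>B. c b = 0))"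

lemma findepD:
  "findep W B \<Longrightarrow> \<forall>b\<in>B. c b \<in> W \<Longrightarrow> (\<Sum>b\<in>B. c b * b) = 0 \<Longrightarrow> b \<in> B \<Longrightarrow> c b = 0"
  unfolding findep_def by blast

lemma in_fspan_remove_if_dependent:
  assumes W: "subfield W" and T: "finite T" "\<forall>b\<in>T. c b \<in> W" "(\<Sum>b\<in>T. c b * b) = 0"
    and b1: "b1 \<in> T" "c b1 \<noteq> 0"
  shows "b1 \<in> fspan W (T - {b1})"
proof -
  have "c b1 * b1 + (\<Sum>b\<in>T - {b1}. c b * b) = 0"
    using T(3) sum.remove[OF T(1) b1(1), of "\<lambda>b. c b * b"] by simp
  then have "b1 = - (\<Sum>b\<in>T - {b1}. c b * b) / c b1"
    using b1(2) by (simp add: field_simps add_eq_0_iff)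
  also have "\<dots> = (\<Sum>b\<in>T - {b1}. (- c b / c b1) * b)"
    by (simp add: sum_negf[symmetric] sum_divide_distrib)
  finally have "b1 = (\<Sum>b\<in>T - {b1}. (- c b / c b1) * b)" .
  moreover have "\<forall>b\<in>T - {b1}. - c b / c b1 \<in> W"
    using T(2) b1(1) W by (auto intro!: subfield_divide subfield_uminus)
  ultimately show ?thesis
    unfolding fspan_def by (intro CollectI exI[of _ "\<lambda>b. - c b / c b1"]) blast
qed

lemma not_in_fspan_remove_if_findep:
  assumes W: "subfield W" and B: "finite B" "findep W B" and b: "b \<in> B"
  shows "b \<notin> fspan W (B - {b})"
proof
  assume "b \<in> fspan W (B - {b})"
  then obtain d where d: "\<forall>b'\<in>B - {b}. d b' \<in> W" "b = (\<Sum>b'\<in>B - {b}. d b' * b')"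
    unfolding fspan_def by blast
  let ?c = "\<lambda>b'. if b' = b then -1 else d b'"
  have "\<forall>b'\<in>B. ?c b' \<in> W" using d(1) subfield_uminus[OF W subfieldD(2)[OF W]] by auto
  moreover have "(\<Sum>b'\<in>B. ?c b' * b') = 0"
  proof -
    have "(\<Sum>b'\<in>B. ?c b' * b') = ?c b * b + (\<Sum>b'\<in>B - {b}. ?c b' * b')"
      by (rule sum.remove[OF B(1) b])
    also have "(\<Sum>b'\<in>B - {b}. ?c b' * b') = (\<Sum>b'\<in>B - {b}. d b' * b')"
      by (rule sum.cong) auto
    finally show ?thesis using d(2) by simp
  qed
  ultimately have "?c b = 0" by (rule findepD[OF B(2), of ?c b, OF _ _ b])
  then show False by simp
qed

lemma findepI:
  "(\<And>c b. \<forall>b\<in>B. c b \<in> W \<Longrightarrow> (\<Sum>b\<in>B. c b * b) = 0 \<Longrightarrow> b \<in> B \<Longrightarrow> c b = 0) \<Longrightarrow> findep W B"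
  unfolding findep_def by blast

text \<open>A spanning set of least cardinality containing 1 is a basis.\<close>

lemma exists_findep_basis:
  assumes W: "subfield W" and G: "finite G" "fspan W G = UNIV"
  shows "\<exists>B. finite B \<and> 1 \<in> B \<and> fspan W B = UNIV \<and> findep W B"
proof -
  let ?P = "\<lambda>T. T \<subseteq> insert 1 G \<and> 1 \<in> T \<and> fspan W T = UNIV"
  have "?P (insert 1 G)" using fspan_mono[OF W, of "insert 1 G" G] G by auto
  then obtain T where T: "?P T" and minT: "\<And>T'. ?P T' \<Longrightarrow> card T \<le> card T'"
    using ex_has_least_nat[of ?P "insert 1 G" card] by blast
  have fT: "finite T" using T G(1) finite_subset by blast
  have "findep W T"
  proof (rule findepI, rule ccontr)
    fix c b0 assume cW: "\<forall>b\<in>T. c b \<in> W" and c0: "(\<Sum>b\<in>T. c b * b) = 0"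
      and b0: "b0 \<in> T" "c b0 \<noteq> 0"
    have "\<exists>b1\<in>T. b1 \<noteq> 1 \<and> c b1 \<noteq> 0"
    proof (rule ccontr)
      assume only_1: "\<not> (\<exists>b1\<in>T. b1 \<noteq> 1 \<and> c b1 \<noteq> 0)"
      then have "(\<Sum>b\<in>T - {1}. c b * b) = 0" by (intro sum.neutral) auto
      then have "c 1 = 0" using sum.remove[OF fT, of 1 "\<lambda>b. c b * b"] T c0 by simp
      then show False using only_1 b0 by auto
    qed
    then obtain b1 where b1: "b1 \<in> T" "b1 \<noteq> 1" "c b1 \<noteq> 0" by blast
    have "T \<subseteq> fspan W (T - {b1})"
    proof
      fix t assume "t \<in> T"
      then show "t \<in> fspan W (T - {b1})"
        using in_fspan_remove_if_dependent[OF W fT cW c0 b1(1,3)] fspan_base[OF W] fT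
        by (cases "t = b1") auto
    qed
    then have "fspan W T \<subseteq> fspan W (T - {b1})"
      by (rule fspan_least[OF fT subspace_over_fspan[OF W]])
    then have "?P (T - {b1})" using T b1(2) by auto
    then have "card T \<le> card (T - {b1})" by (rule minT)
    then show False using card_Diff1_less[OF fT b1(1)] by simp
  qed
  then show ?thesis using T fT by blast
qed

text \<open>Chosen by \<open>SOME\<close>: meaningful once \<open>B\<close> spans, unique once \<open>B\<close> is independent.\<close>

definition coord :: "'a::field set \<Rightarrow> 'a set \<Rightarrow> 'a \<Rightarrow> 'a \<Rightarrow> 'a" where
  "coord W B b x = (SOME c. (\<forall>b\<in>B. c b \<in> W) \<and> x = (\<Sum>b\<in>B. c b * b)) b"

lemma coord_rep:
  assumes "fspan W B = UNIV"
  shows "(\<forall>b\<in>B. coord W B b x \<in> W) \<and> x = (\<Sum>b\<in>B. coord W B b x * b)"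
proof -
  have "\<exists>c. (\<forall>b\<in>B. c b \<in> W) \<and> x = (\<Sum>b\<in>B. c b * b)"
    using assms unfolding fspan_def by blast
  from someI_ex[OF this] show ?thesis unfolding coord_def .
qed

lemma coord_unique:
  assumes W: "subfield W" and sp: "fspan W B = UNIV" and ind: "findep W B"
    and c: "\<forall>b\<in>B. c b \<in> W" "x = (\<Sum>b\<in>B. c b * b)" and b: "b \<in> B"
  shows "coord W B b x = c b"
proof -
  have r: "\<forall>b\<in>B. coord W B b x \<in> W" "x = (\<Sum>b\<in>B. coord W B b x * b)"
    using coord_rep[OF sp] by blast+
  let ?d = "\<lambda>b. c b - coord W B b x"
  have "\<forall>b\<in>B. ?d b \<in> W" using c(1) r(1) subfieldD(4)[OF W] by blast
  moreover have "(\<Sum>b\<in>B. ?d b * b) = 0"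
    using c(2) r(2) by (simp add: left_diff_distrib sum_subtractf)
  ultimately have "?d b = 0" by (rule findepD[OF ind, of ?d b, OF _ _ b])
  then show ?thesis by simp
qed

context
  fixes W B :: "'a::field set"
  assumes W: "subfield W" and fB: "finite B" and sp: "fspan W B = UNIV" and ind: "findep W B"
begin

lemma coord_in: "b \<in> B \<Longrightarrow> coord W B b x \<in> W"
  using coord_rep[OF sp] by blast

lemma sum_coord: "(\<Sum>b\<in>B. coord W B b x * b) = x"
  using coord_rep[OF sp] by simp

lemma coord_add: "b \<in> B \<Longrightarrow> coord W B b (x + y) = coord W B b x + coord W B b y"
  by (rule coord_unique[OF W sp ind])
    (auto simp: distrib_right sum.distrib sum_coord intro: coord_in subfieldD(3)[OF W])

lemma coord_scale: "b \<in> B \<Longrightarrow> w \<in> W \<Longrightarrow> coord W B b (w * x) = w * coord W B b x"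
  by (rule coord_unique[OF W sp ind])
    (auto simp: mult.assoc sum_coord simp flip: sum_distrib_left intro: coord_in subfieldD(5)[OF W])

lemma coord_basis: "b \<in> B \<Longrightarrow> b' \<in> B \<Longrightarrow> coord W B b b' = (if b = b' then 1 else 0)"
proof (rule coord_unique[OF W sp ind, where c = "\<lambda>b. if b = b' then 1 else 0"])
  assume "b' \<in> B"
  show "\<forall>b\<in>B. (if b = b' then 1 else 0) \<in> W" using subfieldD(1,2)[OF W] by simp
  have "(\<Sum>b\<in>B. (if b = b' then 1 else 0) * b) = (\<Sum>b\<in>B. if b = b' then b else 0)"
    by (rule sum.cong) auto
  then show "b' = (\<Sum>b\<in>B. (if b = b' then 1 else 0) * b)" using fB \<open>b' \<in> B\<close> by simp
qed

lemma linear_over_coord: "b \<in> B \<Longrightarrow> linear_over W (coord W B b)"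
  unfolding linear_over_def using coord_add coord_scale by blast

lemma inj_on_coord: "inj_on (coord W B) B"
proof (rule inj_onI)
  fix b b' assume b: "b \<in> B" "b' \<in> B" "coord W B b = coord W B b'"
  then have "coord W B b' b = 1" using coord_basis[OF b(1) b(1)] by simp
  then show "b = b'" using coord_basis[OF b(2) b(1)] by (simp split: if_splits)
qed

lemma basis_over_mult: "basis_over W (\<lambda>c x. c * x) UNIV B"
  unfolding basis_over_def
proof (intro conjI)
  show "indep_over W (\<lambda>c x. c * x) B" unfolding indep_over_def
  proof (intro allI impI ballI)
    fix S c b assume H: "finite S \<and> S \<subseteq> B \<and> (\<forall>b\<in>S. c b \<in> W) \<and> (\<Sum>b\<in>S. c b * b) = 0"
      and b: "b \<in> S"
    let ?c' = "\<lambda>b. if b \<in> S then c b else 0"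
    have "(\<Sum>b\<in>B. ?c' b * b) = (\<Sum>b\<in>B. if b \<in> S then c b * b else 0)"
      by (rule sum.cong) auto
    also have "\<dots> = (\<Sum>b\<in>B \<inter> S. c b * b)" by (rule sum.inter_restrict[OF fB, symmetric])
    also have "B \<inter> S = S" using H by blast
    finally have "(\<Sum>b\<in>B. ?c' b * b) = 0" using H by simp
    moreover have "\<forall>b\<in>B. ?c' b \<in> W" using H subfieldD(1)[OF W] by auto
    ultimately have "?c' b = 0" using H b by (intro findepD[OF ind, of ?c' b]) auto
    then show "c b = 0" using b by simp
  qed
  show "span_over W (\<lambda>c x. c * x) B = UNIV"
  proof (intro set_eqI iffI)
    fix v :: 'a
    have "v \<in> fspan W B" using sp by simp
    then obtain c where "\<forall>b\<in>B. c b \<in> W" "v = (\<Sum>b\<in>B. c b * b)" unfolding fspan_def by blast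
    then show "v \<in> span_over W (\<lambda>c x. c * x) B" unfolding span_over_def using fB by blast
  qed simp
qed simp

lemma End_over_eq_sum_coord:
  assumes "linear_over W E"
  shows "E = (\<Sum>b\<in>B. mult_op (E b) \<circ> coord W B b)"
proof
  fix x
  have "E x = E (\<Sum>b\<in>B. coord W B b x * b)" unfolding sum_coord ..
  also have "\<dots> = (\<Sum>b\<in>B. coord W B b x * E b)"
    by (rule linear_over_apply_sum[OF assms]) (simp add: coord_in)
  finally show "E x = (\<Sum>b\<in>B. mult_op (E b) \<circ> coord W B b) x"
    by (simp add: sum_fun_apply mult_op_def mult.commute)
qed

lemma coord_combination_eq_0:
  assumes S: "finite S" "S \<subseteq> coord W B ` B" and sum0: "(\<Sum>F\<in>S. mult_op (c F) \<circ> F) = 0"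
    and E: "E \<in> S"
  shows "c E = 0"
proof -
  obtain b0 where b0: "b0 \<in> B" "E = coord W B b0" using E S by blast
  have delta: "F b0 = (if F = E then 1 else 0)" if F: "F \<in> S" for F
  proof -
    obtain b' where b': "b' \<in> B" "F = coord W B b'" using F S by blast
    then have "(F = E) = (b' = b0)"
      using inj_on_eq_iff[OF inj_on_coord b'(1) b0(1)] b0(2) by simp
    then show ?thesis using coord_basis[OF b'(1) b0(1)] b'(2) by simp
  qed
  have "c E = (\<Sum>F\<in>S. if F = E then c F else 0)" using S(1) E by simp
  also have "\<dots> = (\<Sum>F\<in>S. c F * F b0)" by (rule sum.cong) (simp_all add: delta)
  also have "\<dots> = (\<Sum>F\<in>S. mult_op (c F) \<circ> F) b0" by (simp add: sum_fun_apply mult_op_def)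
  also have "\<dots> = 0" unfolding sum0 by simp
  finally show ?thesis .
qed

lemma basis_over_End_over: "basis_over UNIV (\<lambda>c E. mult_op c \<circ> E) (End_over W) (coord W B ` B)"
  unfolding basis_over_def
proof (intro conjI)
  show "coord W B ` B \<subseteq> End_over W" using linear_over_coord by blast
  show "indep_over UNIV (\<lambda>c E. mult_op c \<circ> E) (coord W B ` B)"
    unfolding indep_over_def using coord_combination_eq_0 by blast
  show "span_over UNIV (\<lambda>c E. mult_op c \<circ> E) (coord W B ` B) = End_over W"
  proof (intro set_eqI iffI)
    fix E assume "E \<in> span_over UNIV (\<lambda>c E. mult_op c \<circ> E) (coord W B ` B)"
    then obtain S c where "finite S" "S \<subseteq> coord W B ` B" "E = (\<Sum>F\<in>S. mult_op (c F) \<circ> F)"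
      unfolding span_over_def by blast
    then show "E \<in> End_over W"
      using linear_over_coord
      by (auto intro!: linear_over_sum linear_over_comp linear_over_mult_op)
  next
    fix E assume "E \<in> End_over W"
    then have "E = (\<Sum>b\<in>B. mult_op (E b) \<circ> coord W B b)" by (simp add: End_over_eq_sum_coord)
    also have "\<dots> = (\<Sum>F\<in>coord W B ` B. mult_op (E (inv_into B (coord W B) F)) \<circ> F)"
      using inj_on_coord by (simp add: sum.reindex inv_into_f_f)
    finally have E: "E = (\<Sum>F\<in>coord W B ` B. mult_op (E (inv_into B (coord W B) F)) \<circ> F)" .
    show "E \<in> span_over UNIV (\<lambda>c E. mult_op c \<circ> E) (coord W B ` B)"
      unfolding span_over_def
      by (intro CollectI exI[of _ "coord W B ` B"] exI[of _ "\<lambda>F. E (inv_into B (coord W B) F)"] conjI)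
        (simp add: fB, simp, simp, rule E)
  qed
qed

end

lemma same_dim_End_over:
  assumes W: "subfield W" and G: "finite G" "fspan W G = UNIV"
  shows "same_dim (UNIV::'a::field set) (\<lambda>c E. mult_op c \<circ> E) (End_over W) W (\<lambda>c x. c * x) UNIV"
proof -
  obtain B where B: "finite B" "fspan W B = UNIV" "findep W B"
    using exists_findep_basis[OF W G] by blast
  have "bij_betw (inv_into B (coord W B)) (coord W B ` B) B"
    using bij_betw_inv_into[OF inj_on_imp_bij_betw[OF inj_on_coord[OF W B]]] .
  then show ?thesis
    unfolding same_dim_def using basis_over_End_over[OF W B] basis_over_mult[OF W B] by blast
qed

lemma centralizer_End_over:
  assumes W: "subfield W" and G: "finite G" "fspan W G = UNIV"
  shows "centralizer (End_over W) = W"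
proof
  show "W \<subseteq> centralizer (End_over W)"
    unfolding centralizer_def linear_scalars_def linear_over_def by auto
  obtain B where B: "finite B" "1 \<in> B" "fspan W B = UNIV" "findep W B"
    using exists_findep_basis[OF W G] by blast
  show "centralizer (End_over W) \<subseteq> W"
  proof
    fix x assume "x \<in> centralizer (End_over W)"
    then have "coord W B 1 (x * 1) = x * coord W B 1 1"
      using linear_over_coord[OF W B(1,3,4,2)] unfolding centralizer_def linear_scalars_def by blast
    then have "x = coord W B 1 x" using coord_basis[OF W B(1,3,4) B(2) B(2)] by simp
    then show "x \<in> W" using coord_in[OF W B(1,3,4) B(2)] by metis
  qed
qed

section \<open>Frobenius powers\<close>

lemma frob_pow_antimono:
  assumes "n \<le> m"
  shows "frob_pow p m \<subseteq> (frob_pow p n :: 'a::field set)"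
proof
  fix x :: 'a assume "x \<in> frob_pow p m"
  then obtain a where "x = a ^ p ^ m" by (auto simp: frob_pow_def)
  also have "\<dots> = (a ^ p ^ (m - n)) ^ p ^ n"
    using assms by (simp flip: power_mult power_add)
  finally show "x \<in> frob_pow p n" by (auto simp: frob_pow_def)
qed

lemma perfect_core_subset_frob_pow: "perfect_core p \<subseteq> (frob_pow p n :: 'a::field set)"
  by (auto simp: perfect_core_def)

lemma power_in_frob_pow: "x ^ (p ^ n) \<in> frob_pow p n"
  by (auto simp: frob_pow_def)

context
  fixes p :: nat
  assumes char: "CHAR('a::field) = p" and prime: "prime p"
begin

lemma binomial_sum_CHAR:
  fixes g :: "nat \<Rightarrow> 'a"
  shows "(\<Sum>k\<le>p. of_nat (p choose k) * g k) = g 0 + g p"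
proof -
  have "of_nat (p choose k) = (0::'a)" if "k \<in> {..p} - {0, p}" for k
    using that dvd_choose_prime[of k p] prime char of_nat_eq_0_iff_char_dvd by auto
  then have "(\<Sum>k\<le>p. of_nat (p choose k) * g k) = (\<Sum>k\<in>{0,p}. of_nat (p choose k) * g k)"
    by (intro sum.mono_neutral_right) auto
  also have "\<dots> = g 0 + g p" using prime by (simp add: prime_gt_0_nat)
  finally show ?thesis .
qed

lemma add_power_CHAR: "(x + y) ^ p = x ^ p + (y ^ p :: 'a)"
proof -
  have "(x + y) ^ p = (\<Sum>k\<le>p. of_nat (p choose k) * (x ^ k * y ^ (p - k)))"
    by (simp add: binomial_ring mult.assoc)
  then show ?thesis by (simp add: binomial_sum_CHAR)
qed

lemma add_power_prime_power: "(x + y) ^ (p ^ n) = x ^ (p ^ n) + (y ^ (p ^ n) :: 'a)"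
proof (induction n)
  case (Suc n)
  have "(x + y) ^ (p ^ Suc n) = ((x + y) ^ (p ^ n)) ^ p" by (simp only: power_Suc2 power_mult)
  then show ?case by (simp only: Suc add_power_CHAR power_Suc2 power_mult)
qed simp

lemma diff_power_prime_power: "(x - y) ^ (p ^ n) = x ^ (p ^ n) - (y ^ (p ^ n) :: 'a)"
  using add_power_prime_power[of "x - y" y n] by (simp add: algebra_simps)

lemma subfield_frob_pow: "subfield (frob_pow p n :: 'a set)"
  unfolding subfield_def frob_pow_def
proof (intro conjI ballI)
  show "(0::'a) \<in> range (\<lambda>x. x ^ p ^ n)"
    using prime by (intro image_eqI[of _ _ 0]) (auto simp: prime_gt_0_nat)
  show "(1::'a) \<in> range (\<lambda>x. x ^ p ^ n)" by (intro image_eqI[of _ _ 1]) auto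
next
  fix x y :: 'a assume "x \<in> range (\<lambda>x. x ^ p ^ n)" "y \<in> range (\<lambda>x. x ^ p ^ n)"
  then obtain a b where ab: "x = a ^ p ^ n" "y = b ^ p ^ n" by auto
  show "x + y \<in> range (\<lambda>x. x ^ p ^ n)"
    using ab by (intro image_eqI[of _ _ "a + b"]) (auto simp: add_power_prime_power)
  show "x - y \<in> range (\<lambda>x. x ^ p ^ n)"
    using ab by (intro image_eqI[of _ _ "a - b"]) (auto simp: diff_power_prime_power)
  show "x * y \<in> range (\<lambda>x. x ^ p ^ n)"
    using ab by (intro image_eqI[of _ _ "a * b"]) (auto simp: power_mult_distrib)
next
  fix x :: 'a assume "x \<in> range (\<lambda>x. x ^ p ^ n)"
  then obtain a where "x = a ^ p ^ n" by auto
  then show "inverse x \<in> range (\<lambda>x. x ^ p ^ n)"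
    by (intro image_eqI[of _ _ "inverse a"]) (auto simp: power_inverse)
qed

end

section \<open>Commutators and differential operators\<close>

lemma fold_comm_op_0 [simp]: "fold comm_op bs 0 = 0"
  by (induction bs) (simp_all add: comm_op_def zero_fun_def)

lemma diff_ord_iff_fold: "diff_ord n D \<longleftrightarrow> (\<forall>bs. length bs = Suc n \<longrightarrow> fold comm_op bs D = 0)"
proof (induction n arbitrary: D)
  case 0
  show ?case
  proof
    assume "diff_ord 0 D"
    then show "\<forall>bs. length bs = Suc 0 \<longrightarrow> fold comm_op bs D = 0"
      by (auto simp: length_Suc_conv)
  next
    assume "\<forall>bs. length bs = Suc 0 \<longrightarrow> fold comm_op bs D = 0"
    then show "diff_ord 0 D" by (auto dest: spec[of _ "[_]"])
  qed
next
  case (Suc n)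
  show ?case
  proof
    assume D: "diff_ord (Suc n) D"
    show "\<forall>bs. length bs = Suc (Suc n) \<longrightarrow> fold comm_op bs D = 0"
    proof (intro allI impI)
      fix bs :: "'a list" assume "length bs = Suc (Suc n)"
      then obtain b bs' where bs: "bs = b # bs'" "length bs' = Suc n"
        by (auto simp: length_Suc_conv)
      have "diff_ord n (comm_op b D)" using D by simp
      then show "fold comm_op bs D = 0" using Suc.IH bs by (simp add: zero_fun_def)
    qed
  next
    assume "\<forall>bs. length bs = Suc (Suc n) \<longrightarrow> fold comm_op bs D = 0"
    then have "diff_ord n (comm_op b D)" for b
      unfolding Suc.IH by (auto dest: spec[of _ "b # _"])
    then show "diff_ord (Suc n) D" by simp
  qed
qed

lemma diff_ord_fold_long:
  assumes "diff_ord n D" "Suc n \<le> length bs"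
  shows "fold comm_op bs D = 0"
proof -
  have "fold comm_op (take (Suc n) bs) D = 0"
    using assms by (simp add: diff_ord_iff_fold)
  then show ?thesis
    by (metis append_take_drop_id comp_apply fold_append fold_comm_op_0)
qed

lemma comm_op_commute: "comm_op a \<circ> comm_op b = comm_op b \<circ> comm_op a"
  by (auto simp: comm_op_def fun_eq_iff algebra_simps)

lemma fold_comm_op_mset: "mset xs = mset ys \<Longrightarrow> fold comm_op xs = fold comm_op ys"
  by (rule fold_multiset_equiv) (auto simp: comm_op_commute)

lemma comm_op_funpow:
  "(comm_op h ^^ m) D x = (\<Sum>k\<le>m. of_nat (m choose k) * ((-1) ^ k * h ^ (m - k) * D (h ^ k * x)))"
proof (induction m arbitrary: x)
  case 0
  show ?case by simp
next
  case (Suc m)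
  have step: "(comm_op h ^^ Suc m) D x = h * (comm_op h ^^ m) D x - (comm_op h ^^ m) D (h * x)"
    unfolding funpow.simps comp_apply comm_op_def[of h "(comm_op h ^^ m) D"] ..
  define f where "f k = (-1) ^ k * h ^ (Suc m - k) * D (h ^ k * x)" for k
  have "(\<Sum>k\<le>Suc m. of_nat (Suc m choose k) * ((-1) ^ k * h ^ (Suc m - k) * D (h ^ k * x)))
      = f 0 + (\<Sum>k\<le>m. of_nat (Suc m choose Suc k) * f (Suc k))"
    unfolding f_def by (subst sum.atMost_Suc_shift) simp
  also have "\<dots> = (\<Sum>k\<le>m. of_nat (m choose k) * f (Suc k))
      + (f 0 + (\<Sum>k\<le>m. of_nat (m choose Suc k) * f (Suc k)))"
    by (simp add: sum.distrib distrib_right)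
  also have "f 0 + (\<Sum>k\<le>m. of_nat (m choose Suc k) * f (Suc k)) = (\<Sum>k\<le>Suc m. of_nat (m choose k) * f k)"
    by (subst sum.atMost_Suc_shift) simp
  also have "\<dots> = (\<Sum>k\<le>m. of_nat (m choose k) * f k)"
    by (simp add: binomial_eq_0)
  also have "(\<Sum>k\<le>m. of_nat (m choose k) * f k) = h * (comm_op h ^^ m) D x"
    unfolding Suc f_def sum_distrib_left by (rule sum.cong) (auto simp: Suc_diff_le algebra_simps)
  also have "(\<Sum>k\<le>m. of_nat (m choose k) * f (Suc k)) = - (comm_op h ^^ m) D (h * x)"
    unfolding Suc f_def sum_negf[symmetric] by (rule sum.cong) (auto simp: algebra_simps)
  finally show ?case unfolding step by simp
qed

lemma comm_op_funpow_CHAR: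
  assumes "CHAR('a::field) = p" "prime p"
  shows "comm_op (h::'a) ^^ p = comm_op (h ^ p)"
proof -
  have "(-1::'a) ^ p = - 1" using minus_power_prime_CHAR[of p "1::'a"] assms by simp
  then show ?thesis
    by (simp add: fun_eq_iff comm_op_funpow binomial_sum_CHAR[OF assms] comm_op_def)
qed

lemma comm_op_funpow_prime_power:
  assumes "CHAR('a::field) = p" "prime p"
  shows "comm_op (h::'a) ^^ (p ^ n) = comm_op (h ^ (p ^ n))"
proof (induction n)
  case (Suc n)
  have "comm_op h ^^ (p ^ Suc n) = (comm_op h ^^ (p ^ n)) ^^ p"
    by (simp add: funpow_mult mult.commute)
  also have "\<dots> = comm_op ((h ^ p ^ n) ^ p)" by (simp add: Suc comm_op_funpow_CHAR[OF assms])
  finally show ?case by (simp add: power_mult[symmetric] mult.commute)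
qed simp

text \<open>\<open>ad(g)^(p^N) = ad(g^(p^N))\<close> vanishes on an operator of order \<open>N < p^N\<close>.\<close>

lemma linear_over_frob_pow_if_diff_ord:
  assumes "CHAR('a::field) = p" "prime p" and D: "additive (D :: 'a \<Rightarrow> 'a)" "diff_ord N D"
  shows "linear_over (frob_pow p N) D"
proof -
  have "N < 2 ^ N" by (rule less_exp)
  also have "\<dots> \<le> p ^ N" using prime_ge_2_nat[OF assms(2)] by (simp add: power_mono)
  finally have "Suc N \<le> length (replicate (p ^ N) g)" for g :: 'a by simp
  then have "comm_op (g ^ p ^ N) D = 0" for g
    using diff_ord_fold_long[OF D(2)] comm_op_funpow_prime_power[OF assms(1,2)]
    by (metis fold_replicate)
  then have "g ^ p ^ N * D x = D (g ^ p ^ N * x)" for g x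
    by (simp add: comm_op_def fun_eq_iff)
  then show ?thesis using D(1) unfolding linear_over_def additive_def frob_pow_def by auto
qed

lemma linear_over_comm_op:
  assumes "linear_over L E"
  shows "linear_over L (comm_op b E)"
proof -
  have add: "E (x + y) = E x + E y" and lin: "a \<in> L \<Longrightarrow> E (a * x) = a * E x" for a x y
    using assms unfolding linear_over_def by blast+
  have "comm_op b E (x + y) = comm_op b E x + comm_op b E y" for x y
    unfolding comm_op_def by (simp only: distrib_left add) (simp add: algebra_simps)
  moreover have "comm_op b E (a * x) = a * comm_op b E x" if "a \<in> L" for a x
  proof -
    have "E (b * (a * x)) = a * E (b * x)" by (simp only: mult.left_commute[of b a x] lin[OF that])
    then show ?thesis unfolding comm_op_def lin[OF that] by (simp add: algebra_simps)
  qed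
  ultimately show ?thesis unfolding linear_over_def by blast
qed

lemma linear_over_fold_comm_op: "linear_over L E \<Longrightarrow> linear_over L (fold comm_op bs E)"
  by (induction bs arbitrary: E) (auto simp: linear_over_comm_op)

lemma comm_op_eq_0_if_linear_over: "linear_over L E \<Longrightarrow> l \<in> L \<Longrightarrow> comm_op l E = 0"
  unfolding linear_over_def comm_op_def by (auto simp: fun_eq_iff)

lemma comm_op_sum_left:
  assumes E: "linear_over L E" and G: "\<forall>g\<in>G. c g \<in> L"
  shows "comm_op (\<Sum>g\<in>G. c g * g) E = (\<Sum>g\<in>G. (\<lambda>x. c g * comm_op g E x))"
proof -
  have "comm_op (\<Sum>g\<in>G. c g * g) E x = (\<Sum>g\<in>G. c g * comm_op g E x)" for x
  proof -
    have "E ((\<Sum>g\<in>G. c g * g) * x) = (\<Sum>g\<in>G. E (c g * (g * x)))"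
      by (simp add: sum_distrib_right mult.assoc additive_sum[OF linear_over_additive[OF E]])
    also have "\<dots> = (\<Sum>g\<in>G. c g * E (g * x))"
      using E G by (intro sum.cong) (auto simp: linear_over_def)
    finally show ?thesis
      by (simp add: comm_op_def sum_distrib_right sum_subtractf right_diff_distrib mult.assoc)
  qed
  then show ?thesis by (simp add: fun_eq_iff sum_fun_apply)
qed

lemma comm_op_add: "comm_op b (E + F) = comm_op b E + comm_op b F"
  unfolding comm_op_def by (auto simp: fun_eq_iff algebra_simps)

lemma comm_op_scale: "comm_op b (\<lambda>x. l * E x) = (\<lambda>x. l * comm_op b E x)"
  unfolding comm_op_def by (auto simp: fun_eq_iff algebra_simps)

lemma fold_comm_op_add: "fold comm_op bs (E + F) = fold comm_op bs E + fold comm_op bs F"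
  by (induction bs arbitrary: E F) (simp_all add: comm_op_add)

lemma fold_comm_op_scale: "fold comm_op bs (\<lambda>x. l * E x) = (\<lambda>x. l * fold comm_op bs E x)"
  by (induction bs arbitrary: E) (simp_all add: comm_op_scale)

lemma fold_comm_op_sum: "fold comm_op bs (sum F S) = (\<Sum>i\<in>S. fold comm_op bs (F i))"
proof (induction S rule: infinite_finite_induct)
  case (insert x S)
  then show ?case by (simp only: sum.insert[OF insert.hyps] fold_comm_op_add)
next
  case (infinite S)
  then show ?case by (simp only: sum.infinite[OF infinite] fold_comm_op_0)
qed (simp only: sum.empty fold_comm_op_0)

lemma exists_count_list_ge:
  assumes "set gs \<subseteq> G" "finite G" "card G * (q - 1) < length gs"
  shows "\<exists>g. q \<le> count_list gs g"
proof (rule ccontr)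
  assume "\<not> ?thesis"
  then have lt: "count_list gs g < q" for g by (simp add: not_le)
  have "count_list gs g \<le> q - 1" for g using lt[of g] by linarith
  then have "length gs \<le> card G * (q - 1)"
    using sum_count_set[OF assms(1,2)] sum_mono[of G "count_list gs" "\<lambda>_. q - 1"] by simp
  then show False using assms(3) by simp
qed

lemma fold_comm_op_eq_0_if_repeated:
  assumes E: "linear_over L E" and q: "q \<le> count_list gs g" "g ^ q \<in> L"
    and comm_pow: "comm_op g ^^ q = comm_op (g ^ q)"
  shows "fold comm_op gs E = 0"
proof -
  obtain rest where rest: "mset rest = mset gs - replicate_mset q g" using ex_mset by blast
  have "replicate_mset q g \<subseteq># mset gs"
    using q(1) by (simp add: subseteq_mset_def count_mset)
  then have "mset (replicate q g @ rest) = mset gs"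
    by (simp add: rest subset_mset.add_diff_inverse)
  then have "fold comm_op gs E = fold comm_op rest ((comm_op g ^^ q) E)"
    by (metis fold_comm_op_mset fold_append fold_replicate comp_apply)
  also have "(comm_op g ^^ q) E = 0"
    using comm_op_eq_0_if_linear_over[OF E q(2)] comm_pow by simp
  also have "fold comm_op rest 0 = 0" by (rule fold_comm_op_0)
  finally show ?thesis .
qed

text \<open>
  If \<open>K\<close> is spanned over \<open>L\<close> by a finite set \<open>G\<close> and \<open>ad(h)^q = ad(h^q)\<close> with \<open>h^q \<in> L\<close>,
  then expanding each commutator along \<open>G\<close> leaves only words in \<open>G\<close>; a word of length
  \<open>> card G * (q - 1)\<close> repeats some letter \<open>q\<close> times, and \<open>ad(g^q)\<close> kills \<open>L\<close>-linear maps.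
\<close>

lemma fold_comm_op_long_eq_0:
  fixes L :: "'a::field set"
  assumes G: "finite G" "fspan L G = UNIV" and qL: "\<And>x. x ^ q \<in> L"
    and comm_pow: "\<And>h. comm_op (h::'a) ^^ q = comm_op (h ^ q)" and E: "linear_over L E"
  shows "set gs \<subseteq> G \<Longrightarrow> card G * (q - 1) < length gs + length bs
    \<Longrightarrow> fold comm_op bs (fold comm_op gs E) = 0"
proof (induction bs arbitrary: gs)
  case Nil
  then obtain g where "q \<le> count_list gs g" using exists_count_list_ge[OF _ G(1), of gs q] by auto
  then have "fold comm_op gs E = 0"
    by (rule fold_comm_op_eq_0_if_repeated[OF E _ qL comm_pow])
  then show ?case by simp
next
  case (Cons b bs)
  let ?F = "fold comm_op gs E"
  obtain c where c: "\<forall>g\<in>G. c g \<in> L" "b = (\<Sum>g\<in>G. c g * g)"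
    using G(2) unfolding fspan_def by blast
  have longer: "fold comm_op bs (comm_op g ?F) = 0" if "g \<in> G" for g
    using Cons.IH[of "gs @ [g]"] Cons.prems that by (simp add: zero_fun_def)
  have "fold comm_op (b # bs) ?F = fold comm_op bs (\<Sum>g\<in>G. (\<lambda>x. c g * comm_op g ?F x))"
    using comm_op_sum_left[OF linear_over_fold_comm_op[OF E] c(1)] c(2) by simp
  also have "\<dots> = (\<Sum>g\<in>G. (\<lambda>x. c g * fold comm_op bs (comm_op g ?F) x))"
    by (simp only: fold_comm_op_sum fold_comm_op_scale)
  also have "\<dots> = 0"
    by (intro sum.neutral) (simp add: longer zero_fun_def)
  finally show ?case by simp
qed

lemma diff_ord_if_linear_over:
  fixes L :: "'a::field set"
  assumes "finite G" "fspan L G = UNIV" "\<And>x. x ^ q \<in> L"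
    and "\<And>h. comm_op (h::'a) ^^ q = comm_op (h ^ q)" and "linear_over L E"
  shows "diff_ord (card G * (q - 1)) E"
  unfolding diff_ord_iff_fold
  using fold_comm_op_long_eq_0[OF assms, of "[]"] by simp

section \<open>Finite dimension of \<open>K\<close> over \<open>K^(p^n)\<close>\<close>

lemma mult_in_fspan:
  assumes "subfield L" "finite M" "\<And>m. m \<in> M \<Longrightarrow> t * m \<in> fspan L N" "v \<in> fspan L M"
  shows "t * v \<in> fspan L N"
proof -
  have "fspan L M \<subseteq> {v. t * v \<in> fspan L N}"
    using assms(1-3) by (intro fspan_least subspace_over_preimage subspace_over_fspan) auto
  then show ?thesis using assms(4) by blast
qed

text \<open>
  If \<open>s^q \<in> L\<close> for \<open>s \<in> S\<close>, the \<open>L\<close>-span of the monomials \<open>\<Prod>s^(e s)\<close> with \<open>e s < q\<close>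
  is stable under multiplication by \<open>S\<close>; it is built one generator at a time.
\<close>

lemma fspan_mult_stable_insert:
  assumes L: "subfield L" and q: "q > 0" "s ^ q \<in> L"
    and M: "finite M" "1 \<in> fspan L M" "\<forall>t\<in>S. \<forall>v\<in>fspan L M. t * v \<in> fspan L M"
  defines "M' \<equiv> (\<lambda>(i, m). s ^ i * m) ` ({..<q} \<times> M)"
  shows "finite M' \<and> 1 \<in> fspan L M' \<and> (\<forall>t\<in>insert s S. \<forall>v\<in>fspan L M'. t * v \<in> fspan L M')"
proof -
  have fM': "finite M'" using M(1) by (simp add: M'_def)
  have MM': "M \<subseteq> M'" unfolding M'_def using q by (force intro: image_eqI[of _ _ "(0, _)"])
  have base: "m \<in> M' \<Longrightarrow> m \<in> fspan L M'" for m using fspan_base[OF L fM'] .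
  have pow: "s ^ i * v \<in> fspan L M'" if "i < q" "v \<in> fspan L M" for i v
  proof (rule mult_in_fspan[OF L M(1) _ that(2)])
    fix m assume "m \<in> M"
    then have "s ^ i * m \<in> M'"
      unfolding M'_def using that(1) by (intro image_eqI[of _ _ "(i, m)"]) auto
    then show "s ^ i * m \<in> fspan L M'" by (rule base)
  qed
  have "t * m' \<in> fspan L M'" if t: "t \<in> insert s S" and m': "m' \<in> M'" for t m'
  proof -
    obtain i m where im: "i < q" "m \<in> M" "m' = s ^ i * m" using m' unfolding M'_def by auto
    consider "t = s" "Suc i < q" | "t = s" "Suc i = q" | "t \<in> S"
      using t im(1) by (metis Suc_lessI insertE)
    then show ?thesis
    proof cases
      case 1
      then have "t * m' \<in> M'" unfolding M'_def using im
        by (intro image_eqI[of _ _ "(Suc i, m)"]) (auto simp: mult.assoc)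
      then show ?thesis using base by blast
    next
      case 2
      then have "t * m' = s ^ q * m" using im by (metis mult.assoc power_Suc)
      moreover have "m \<in> fspan L M'" using base MM' im(2) by blast
      ultimately show ?thesis using subspace_over_fspan[OF L] q(2) unfolding subspace_over_def by auto
    next
      case 3
      then have "t * m \<in> fspan L M" using M(3) fspan_base[OF L M(1)] im(2) by blast
      then have "s ^ i * (t * m) \<in> fspan L M'" by (rule pow[OF im(1)])
      then show ?thesis using im(3) by (simp add: mult.left_commute)
    qed
  qed
  then have "\<forall>t\<in>insert s S. \<forall>v\<in>fspan L M'. t * v \<in> fspan L M'"
    by (blast intro: mult_in_fspan[OF L fM'])
  moreover have "1 \<in> fspan L M'" using fspan_mono[OF L fM' MM'] M(2) by blast
  ultimately show ?thesis using fM' by blast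
qed

lemma exists_fspan_mult_stable:
  assumes L: "subfield L" and q: "q > 0" and S: "finite S" "\<forall>s\<in>S. s ^ q \<in> L"
  shows "\<exists>M. finite M \<and> 1 \<in> fspan L M \<and> (\<forall>s\<in>S. \<forall>v\<in>fspan L M. s * v \<in> fspan L M)"
  using S
proof (induction S rule: finite_induct)
  case empty
  show ?case by (intro exI[of _ "{1}"]) (auto intro: fspan_base[OF L])
next
  case (insert s S)
  then obtain M where M: "finite M" "1 \<in> fspan L M" "\<forall>t\<in>S. \<forall>v\<in>fspan L M. t * v \<in> fspan L M"
    by auto
  have "s ^ q \<in> L" using insert.prems by simp
  from fspan_mult_stable_insert[OF L q this M] show ?case by (rule exI)
qed

lemma subfield_multipliers:
  assumes L: "subfield L" and X: "subspace_over L X" and q: "q > 0" "\<And>x. x ^ q \<in> L"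
  shows "subfield {x. \<forall>v\<in>X. x * v \<in> X}" (is "subfield ?Z")
proof -
  have X0: "0 \<in> X" and Xadd: "\<And>a b. a \<in> X \<Longrightarrow> b \<in> X \<Longrightarrow> a + b \<in> X"
    and Xscale: "\<And>w a. w \<in> L \<Longrightarrow> a \<in> X \<Longrightarrow> w * a \<in> X"
    using X unfolding subspace_over_def by auto
  have Zmult: "x \<in> ?Z \<Longrightarrow> y \<in> ?Z \<Longrightarrow> x * y \<in> ?Z" for x y
    by (simp add: mult.assoc)
  have Zpow: "x \<in> ?Z \<Longrightarrow> x ^ k \<in> ?Z" for x k
    by (induction k) (simp_all add: mult.assoc)
  have LZ: "L \<subseteq> ?Z" using Xscale by blast
  have Zadd: "x + y \<in> ?Z" if "x \<in> ?Z" "y \<in> ?Z" for x y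
    using that Xadd by (simp add: distrib_right)
  have Zdiff: "x - y \<in> ?Z" if "x \<in> ?Z" "y \<in> ?Z" for x y
  proof -
    have "- 1 \<in> ?Z" using LZ subfield_uminus[OF L subfieldD(2)[OF L]] by blast
    then have "x + (- 1) * y \<in> ?Z" using that by (intro Zadd Zmult)
    then show ?thesis by simp
  qed
  have Zinverse: "inverse x \<in> ?Z" if "x \<in> ?Z" for x
  proof (cases "x = 0")
    case False
    obtain r where r: "q = Suc r" using q(1) gr0_implies_Suc by blast
    have "inverse x = inverse (x ^ q) * x ^ r"
      using False unfolding r by (simp add: inverse_mult_distrib)
    moreover have "inverse (x ^ q) \<in> ?Z" using LZ subfieldD(6)[OF L q(2)] by blast
    ultimately show ?thesis using Zmult Zpow[OF that] by presburger
  qed (simp add: X0)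
  show ?thesis unfolding subfield_def
  proof (intro conjI ballI)
    show "0 \<in> ?Z" "1 \<in> ?Z" using X0 by simp_all
  qed (erule Zadd Zdiff Zmult Zinverse, assumption?)+
qed

context
  fixes p :: nat
  assumes char: "CHAR('a::field) = p" and prime: "prime p"
    and fin_gen: "fin_gen_over (perfect_core p :: 'a set)"
begin

lemma finite_fspan_frob_pow: "\<exists>G. finite G \<and> fspan (frob_pow p n) G = (UNIV :: 'a set)"
proof -
  let ?L = "frob_pow p n :: 'a set"
  have L: "subfield ?L" by (rule subfield_frob_pow[OF char prime])
  have q: "p ^ n > 0" using prime prime_gt_0_nat by simp
  obtain S where S: "finite S" "gen_field (perfect_core p \<union> S) = (UNIV :: 'a set)"
    using fin_gen unfolding fin_gen_over_def by blast
  obtain M where M: "finite M" "1 \<in> fspan ?L M" "\<forall>s\<in>S. \<forall>v\<in>fspan ?L M. s * v \<in> fspan ?L M"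
    using exists_fspan_mult_stable[OF L q S(1)] power_in_frob_pow by blast
  let ?Z = "{x. \<forall>v\<in>fspan ?L M. x * v \<in> fspan ?L M}"
  have "subfield ?Z"
    using subfield_multipliers[OF L subspace_over_fspan[OF L] q power_in_frob_pow] .
  moreover have "perfect_core p \<union> S \<subseteq> ?Z"
  proof -
    have "w \<in> ?Z" if "w \<in> ?L" for w
      using subspace_over_fspan[OF L] that unfolding subspace_over_def by simp
    then show ?thesis using perfect_core_subset_frob_pow[of p n] M(3) by auto
  qed
  ultimately have "gen_field (perfect_core p \<union> S) \<subseteq> ?Z" by (rule gen_field_least)
  then have "x \<in> ?Z" for x unfolding S(2) by blast
  then have "x * 1 \<in> fspan ?L M" for x using M(2) by blast
  then have "fspan ?L M = UNIV" by (simp add: set_eq_iff)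
  then show ?thesis using M(1) by blast
qed

lemma Diff_eq_End_over:
  assumes "frob_pow p n \<subseteq> (A :: 'a set)"
  shows "Diff A = End_over A"
proof (intro set_eqI iffI)
  fix E assume "E \<in> End_over A"
  then have E: "linear_over A E" by simp
  obtain G where G: "finite G" "fspan (frob_pow p n) G = (UNIV :: 'a set)"
    using finite_fspan_frob_pow by blast
  have "diff_ord (card G * (p ^ n - 1)) E"
    using G power_in_frob_pow comm_op_funpow_prime_power[OF char prime] linear_over_mono[OF assms E]
    by (rule diff_ord_if_linear_over)
  then show "E \<in> Diff A" using E unfolding Diff_def by blast
qed (simp add: Diff_def)

end

section \<open>Rings of operators containing \<open>K\<close>\<close>

lemma K_subalgebra_mult_op_comp: "K_subalgebra \<D> \<Longrightarrow> E \<in> \<D> \<Longrightarrow> mult_op c \<circ> E \<in> \<D>"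
  unfolding K_subalgebra_def by blast

lemma K_subalgebra_sum:
  assumes "K_subalgebra \<D>" "finite S" "\<And>i. i \<in> S \<Longrightarrow> f i \<in> \<D>"
  shows "sum f S \<in> \<D>"
  using assms(2,3)
proof (induction S rule: finite_induct)
  case empty
  have "mult_op 0 = (0 :: 'a \<Rightarrow> 'a)" by (simp add: mult_op_def fun_eq_iff)
  then show ?case using assms(1) unfolding K_subalgebra_def by (metis sum.empty)
next
  case (insert x S)
  then have "f x \<in> \<D>" "sum f S \<in> \<D>" by auto
  then show ?case using assms(1) unfolding K_subalgebra_def by (simp only: sum.insert[OF insert.hyps])
qed

context
  fixes \<D> :: "('a::field \<Rightarrow> 'a) set"
  assumes alg: "K_subalgebra \<D>" and ops_additive: "\<And>E. E \<in> \<D> \<Longrightarrow> additive E"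
begin

lemma subfield_centralizer_ops: "subfield (centralizer \<D>)"
  using subfield_centralizer ops_additive by blast

lemma linear_over_centralizer_ops: "E \<in> \<D> \<Longrightarrow> linear_over (centralizer \<D>) E"
  using linear_over_centralizer ops_additive by blast

text \<open>
  The operators in \<open>\<D>\<close> vanishing on \<open>S\<close> form a left \<open>\<D>\<close>-module, so the value at \<open>x\<close>
  is a \<open>\<D>\<close>-linear function of the value at \<open>u\<close>; the ratio therefore commutes with \<open>\<D>\<close>.
\<close>

lemma centralizer_ratio:
  assumes r0: "r0 \<in> \<D>" "\<forall>s\<in>S. r0 s = 0" "r0 u \<noteq> 0"
    and kernel: "\<And>r. r \<in> \<D> \<Longrightarrow> \<forall>s\<in>S. r s = 0 \<Longrightarrow> r u = 0 \<Longrightarrow> r x = 0"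
  shows "\<exists>w\<in>centralizer \<D>. \<forall>r\<in>\<D>. (\<forall>s\<in>S. r s = 0) \<longrightarrow> r x = w * r u"
proof -
  let ?I = "{r\<in>\<D>. \<forall>s\<in>S. r s = 0}"
  have comp: "E \<circ> r \<in> ?I" if "E \<in> \<D>" "r \<in> ?I" for E r
    using that alg additive_0[OF ops_additive[OF that(1)]] unfolding K_subalgebra_def by auto
  have scale: "mult_op c \<circ> r \<in> ?I" if "r \<in> ?I" for c r
    using comp[OF _ that] alg unfolding K_subalgebra_def by blast
  have same: "r x = r' x" if "r \<in> ?I" "r' \<in> ?I" "r u = r' u" for r r'
  proof -
    let ?d = "r + (mult_op (-1) \<circ> r')"
    have "?d \<in> \<D>" using that(1) scale[OF that(2)] alg unfolding K_subalgebra_def by blast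
    moreover have "\<forall>s\<in>S. ?d s = 0" "?d u = 0" using that by (simp_all add: mult_op_def)
    ultimately have "?d x = 0" by (rule kernel)
    then show ?thesis by (simp add: mult_op_def)
  qed
  define r1 where "r1 = mult_op (inverse (r0 u)) \<circ> r0"
  have r1: "r1 \<in> ?I" "r1 u = 1" using scale r0 by (auto simp: r1_def mult_op_def)
  define w where "w = r1 x"
  have ratio: "r x = w * r u" if "r \<in> ?I" for r
    using same[OF that scale[OF r1(1)]] r1(2) by (simp add: mult_op_def w_def mult.commute)
  have "w \<in> linear_scalars E" if E: "E \<in> \<D>" for E
  proof -
    have "E (w * y) = w * E y" for y
    proof -
      have ry: "mult_op y \<circ> r1 \<in> ?I" "(mult_op y \<circ> r1) u = y" "(mult_op y \<circ> r1) x = y * w"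
        using scale[OF r1(1)] r1(2) by (simp_all add: mult_op_def w_def)
      show ?thesis using ratio[OF comp[OF E ry(1)]] ry(2,3) by (simp add: mult.commute)
    qed
    then show ?thesis unfolding linear_scalars_def by blast
  qed
  then have "w \<in> centralizer \<D>" unfolding centralizer_def by blast
  then show ?thesis using ratio by blast
qed

lemma vanishes_on_fspan:
  assumes "r \<in> \<D>" "\<forall>s\<in>S. r s = 0" "v \<in> fspan (centralizer \<D>) S"
  shows "r v = 0"
proof -
  obtain c where c: "\<forall>b\<in>S. c b \<in> centralizer \<D>" "v = (\<Sum>b\<in>S. c b * b)"
    using assms(3) unfolding fspan_def by blast
  show ?thesis
    using linear_over_apply_sum[OF linear_over_centralizer_ops[OF assms(1)] c(1)] c(2) assms(2)
    by simp
qed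

text \<open>
  Jacobson's density theorem, by induction on \<open>S\<close>: when a vector \<open>u\<close> outside the span of \<open>S\<close> is
  added, the scalar \<open>w\<close> of the previous lemma is the coefficient of \<open>u\<close> in \<open>x\<close>.
\<close>

lemma density:
  assumes "finite S" "x \<notin> fspan (centralizer \<D>) S"
  shows "\<exists>r\<in>\<D>. (\<forall>s\<in>S. r s = 0) \<and> r x \<noteq> 0"
  using assms
proof (induction S arbitrary: x rule: finite_induct)
  case (empty x)
  then have "x \<noteq> 0"
    using subspace_over_fspan[OF subfield_centralizer_ops] unfolding subspace_over_def by blast
  moreover have "mult_op 1 \<in> \<D>" using alg unfolding K_subalgebra_def by blast
  ultimately show ?case by (intro bexI[of _ "mult_op 1"]) (simp_all add: mult_op_def)
next
  case (insert u S x)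
  let ?W = "centralizer \<D>"
  show ?case
  proof (cases "u \<in> fspan ?W S")
    case True
    have "x \<notin> fspan ?W S"
      using insert.prems insert.hyps(1) fspan_mono[OF subfield_centralizer_ops, of "insert u S" S]
      by auto
    then obtain r where r: "r \<in> \<D>" "\<forall>s\<in>S. r s = 0" "r x \<noteq> 0" using insert.IH by blast
    then show ?thesis using vanishes_on_fspan[OF r(1,2) True] by auto
  next
    case False
    show ?thesis
    proof (rule ccontr)
      assume "\<not> ?thesis"
      then have kernel: "\<And>r. r \<in> \<D> \<Longrightarrow> \<forall>s\<in>S. r s = 0 \<Longrightarrow> r u = 0 \<Longrightarrow> r x = 0" by auto
      obtain r0 where r0: "r0 \<in> \<D>" "\<forall>s\<in>S. r0 s = 0" "r0 u \<noteq> 0"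
        using insert.IH False by blast
      have "\<exists>w\<in>?W. \<forall>r\<in>\<D>. (\<forall>s\<in>S. r s = 0) \<longrightarrow> r x = w * r u"
        using r0 kernel by (rule centralizer_ratio)
      then obtain w where w: "w \<in> ?W" and ratio: "\<forall>r\<in>\<D>. (\<forall>s\<in>S. r s = 0) \<longrightarrow> r x = w * r u"
        by blast
      have "r (x - w * u) = 0" if "r \<in> \<D>" "\<forall>s\<in>S. r s = 0" for r
      proof -
        have "r (w * u) = w * r u"
          using linear_over_centralizer_ops[OF that(1)] w unfolding linear_over_def by blast
        then show ?thesis using ratio that by (simp add: additive_diff[OF ops_additive[OF that(1)]])
      qed
      then have "x - w * u \<in> fspan ?W S" using insert.IH by blast
      then have "x - w * u + w * u \<in> fspan ?W (insert u S)"
        by (rule fspan_insert[OF subfield_centralizer_ops insert.hyps(1) _ w])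
      then show False using insert.prems by simp
    qed
  qed
qed

lemma exists_dual_ops:
  assumes B: "finite B" "findep (centralizer \<D>) B"
  shows "\<exists>P. \<forall>b\<in>B. P b \<in> \<D> \<and> P b b = 1 \<and> (\<forall>b'\<in>B - {b}. P b b' = 0)"
proof -
  have "\<exists>P\<in>\<D>. P b = 1 \<and> (\<forall>b'\<in>B - {b}. P b' = 0)" if b: "b \<in> B" for b
  proof -
    have "b \<notin> fspan (centralizer \<D>) (B - {b})"
      by (rule not_in_fspan_remove_if_findep[OF subfield_centralizer_ops B b])
    then obtain r where r: "r \<in> \<D>" "\<forall>s\<in>B - {b}. r s = 0" "r b \<noteq> 0"
      using density B(1) by blast
    then show ?thesis
      using K_subalgebra_mult_op_comp[OF alg r(1), of "inverse (r b)"]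
      by (intro bexI[of _ "mult_op (inverse (r b)) \<circ> r"]) (simp_all add: mult_op_def)
  qed
  then show ?thesis by metis
qed

theorem jacobson_bourbaki:
  assumes "finite G" "fspan (centralizer \<D>) G = UNIV"
  shows "\<D> = End_over (centralizer \<D>)"
proof
  let ?W = "centralizer \<D>"
  have W: "subfield ?W" by (rule subfield_centralizer_ops)
  show "\<D> \<subseteq> End_over ?W" using linear_over_centralizer_ops by blast
  obtain B where B: "finite B" "fspan ?W B = UNIV" "findep ?W B"
    using exists_findep_basis[OF W assms] by blast
  obtain P where P: "\<forall>b\<in>B. P b \<in> \<D> \<and> P b b = 1 \<and> (\<forall>b'\<in>B - {b}. P b b' = 0)"
    using exists_dual_ops[OF B(1,3)] by blast
  have P_coord: "P b = coord ?W B b" if b: "b \<in> B" for b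
  proof
    fix x
    have Pb: "P b \<in> \<D>" using P b by blast
    have "P b x = P b (\<Sum>b'\<in>B. coord ?W B b' x * b')" unfolding sum_coord[OF W B] ..
    also have "\<dots> = (\<Sum>b'\<in>B. coord ?W B b' x * P b b')"
      by (rule linear_over_apply_sum[OF linear_over_centralizer_ops[OF Pb]]) (simp add: coord_in[OF W B])
    also have "\<dots> = (\<Sum>b'\<in>B. if b' = b then coord ?W B b' x else 0)"
      by (rule sum.cong) (use P b in auto)
    also have "\<dots> = coord ?W B b x" using B(1) b by simp
    finally show "P b x = coord ?W B b x" .
  qed
  show "End_over ?W \<subseteq> \<D>"
  proof
    fix E assume "E \<in> End_over ?W"
    then have "E = (\<Sum>b\<in>B. mult_op (E b) \<circ> P b)"
      using End_over_eq_sum_coord[OF W B] P_coord by (simp cong: sum.cong)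
    also have "\<dots> \<in> \<D>"
      using P by (intro K_subalgebra_sum[OF alg B(1)] K_subalgebra_mult_op_comp[OF alg]) blast
    finally show "E \<in> \<D>" .
  qed
qed

end

section \<open>The correspondence\<close>

lemma Diff_antimono: "B \<subseteq> A \<Longrightarrow> Diff A \<subseteq> Diff B"
  unfolding Diff_def using linear_over_mono by blast

context
  fixes W :: "nat \<Rightarrow> 'a::field set" and p :: nat
  assumes tower: "power_tower p W"
begin

lemma power_tower_subfield: "subfield (W i)"
  using tower unfolding power_tower_def by blast

lemma power_tower_gen_field: "j \<le> i \<Longrightarrow> W j = gen_field (W i \<union> frob_pow p j)"
  using tower unfolding power_tower_def compositum_def by blast

lemma frob_pow_subset_power_tower: "frob_pow p i \<subseteq> W i"
  using power_tower_gen_field[of i i] gen_field_upper by blast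

lemma power_tower_antimono: "j \<le> i \<Longrightarrow> W i \<subseteq> W j"
  using power_tower_gen_field gen_field_upper by blast

end

context
  fixes p :: nat
  assumes char: "CHAR('a::field) = p" and prime: "prime p"
    and fin_gen: "fin_gen_over (perfect_core p :: 'a set)"
begin

lemma finite_fspan_over_frob_pow:
  assumes "subfield W" "frob_pow p n \<subseteq> (W :: 'a set)"
  shows "\<exists>G. finite G \<and> fspan W G = UNIV"
  using finite_fspan_frob_pow[OF char prime fin_gen, of n] fspan_mono_scalars[OF assms(2)] by blast

lemma Diff_perfect_core_ex_frob_pow:
  assumes "E \<in> Diff (perfect_core p :: 'a set)"
  shows "\<exists>n. E \<in> Diff (frob_pow p n :: 'a set)"
proof -
  obtain N where "diff_ord N E" "additive E"
    using assms linear_over_additive unfolding Diff_def by blast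
  then show ?thesis
    using linear_over_frob_pow_if_diff_ord[OF char prime] unfolding Diff_def by blast
qed

context
  fixes W :: "nat \<Rightarrow> 'a set"
  assumes tower: "power_tower p W"
begin

lemma Diff_power_tower: "Diff (W n) = End_over (W n)"
  using Diff_eq_End_over[OF char prime fin_gen frob_pow_subset_power_tower[OF tower]] .

lemma K_subalgebra_Diff_tower: "K_subalgebra (Diff_tower W)"
  unfolding K_subalgebra_def Diff_tower_def
proof (intro conjI allI ballI)
  fix c show "mult_op c \<in> (\<Union>n. Diff (W n))"
    using Diff_power_tower[of 0] linear_over_mult_op by blast
next
  fix E F assume "E \<in> (\<Union>n. Diff (W n))" "F \<in> (\<Union>n. Diff (W n))"
  then obtain m m' where "linear_over (W m) E" "linear_over (W m') F"
    using Diff_power_tower by blast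
  then have "linear_over (W (max m m')) E" "linear_over (W (max m m')) F"
    using linear_over_mono power_tower_antimono[OF tower] by (meson max.cobounded1 max.cobounded2)+
  then have "E + F \<in> Diff (W (max m m'))" "E \<circ> F \<in> Diff (W (max m m'))"
    using linear_over_add linear_over_comp Diff_power_tower by blast+
  then show "E + F \<in> (\<Union>n. Diff (W n))" "E \<circ> F \<in> (\<Union>n. Diff (W n))" by blast+
qed

lemma Diff_tower_subset_Diff_perfect_core: "Diff_tower W \<subseteq> Diff (perfect_core p)"
  unfolding Diff_tower_def
  using Diff_antimono perfect_core_subset_frob_pow frob_pow_subset_power_tower[OF tower]
  by (meson UN_least order_trans)

lemma D_level_Diff_tower: "D_level p (Diff_tower W) n = End_over (W n)"
proof (intro set_eqI iffI)
  fix E assume "E \<in> D_level p (Diff_tower W) n"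
  then obtain m where Em: "linear_over (W m) E" and En: "linear_over (frob_pow p n) E"
    unfolding D_level_def Diff_tower_def Diff_def by blast
  show "E \<in> End_over (W n)"
  proof (cases "m \<le> n")
    case True
    then show ?thesis using linear_over_mono[OF power_tower_antimono[OF tower True] Em] by simp
  next
    case False
    then show ?thesis
      using linear_over_gen_field[OF linear_over_Un[OF Em En]] power_tower_gen_field[OF tower, of n m]
      by simp
  qed
next
  fix E assume E: "E \<in> End_over (W n)"
  then have "E \<in> Diff_tower W" unfolding Diff_tower_def using Diff_power_tower by blast
  moreover have "E \<in> Diff (frob_pow p n)"
    using Diff_eq_End_over[OF char prime fin_gen, of n "frob_pow p n"]
      linear_over_mono[OF frob_pow_subset_power_tower[OF tower]] E by simp
  ultimately show "E \<in> D_level p (Diff_tower W) n" unfolding D_level_def by (rule IntI)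
qed

lemma tower_of_Diff_tower: "tower_of p (Diff_tower W) = W"
proof
  fix n
  obtain G where "finite G" "fspan (W n) G = UNIV"
    using finite_fspan_over_frob_pow[OF power_tower_subfield[OF tower]
        frob_pow_subset_power_tower[OF tower]] by blast
  then show "tower_of p (Diff_tower W) n = W n"
    unfolding tower_of_eq_centralizer D_level_Diff_tower
    by (rule centralizer_End_over[OF power_tower_subfield[OF tower]])
qed

end

context
  fixes \<D> :: "('a \<Rightarrow> 'a) set"
  assumes alg: "K_subalgebra \<D>"
begin

lemma D_level_eq_Int_End_over: "D_level p \<D> n = \<D> \<inter> End_over (frob_pow p n)"
  unfolding D_level_def using Diff_eq_End_over[OF char prime fin_gen, of n "frob_pow p n"] by simp

lemma K_subalgebra_D_level: "K_subalgebra (D_level p \<D> n)"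
  using alg linear_over_mult_op linear_over_add linear_over_comp
  unfolding D_level_eq_Int_End_over K_subalgebra_def by blast

lemma additive_D_level: "E \<in> D_level p \<D> n \<Longrightarrow> additive E"
  unfolding D_level_eq_Int_End_over using linear_over_additive by blast

lemma subfield_tower_of: "subfield (tower_of p \<D> n)"
  unfolding tower_of_eq_centralizer using subfield_centralizer additive_D_level by blast

lemma frob_pow_subset_tower_of: "frob_pow p n \<subseteq> tower_of p \<D> n"
  unfolding tower_of_eq_centralizer centralizer_def linear_scalars_def D_level_eq_Int_End_over
  by (auto simp: linear_over_def)

lemma D_level_eq_End_over: "D_level p \<D> n = End_over (tower_of p \<D> n)"
proof -
  obtain G where G: "finite G" "fspan (tower_of p \<D> n) G = UNIV"
    using finite_fspan_over_frob_pow[OF subfield_tower_of frob_pow_subset_tower_of] by blast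
  show ?thesis
    using K_subalgebra_D_level additive_D_level G unfolding tower_of_eq_centralizer
    by (rule jacobson_bourbaki)
qed

lemma power_tower_tower_of: "power_tower p (tower_of p \<D>)"
  unfolding power_tower_def compositum_def
proof (intro conjI allI impI)
  fix i show "subfield (tower_of p \<D> i)" by (rule subfield_tower_of)
next
  fix i j :: nat assume "j \<le> i"
  let ?M = "gen_field (tower_of p \<D> i \<union> frob_pow p j)"
  have "D_level p \<D> j = End_over ?M"
  proof (intro set_eqI iffI)
    fix E assume "E \<in> D_level p \<D> j"
    then have ED: "E \<in> \<D>" and Ej: "linear_over (frob_pow p j) E"
      unfolding D_level_eq_Int_End_over by auto
    then have "E \<in> D_level p \<D> i"
      using linear_over_mono[OF frob_pow_antimono[OF \<open>j \<le> i\<close>]] unfolding D_level_eq_Int_End_over by blast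
    then have "linear_over (tower_of p \<D> i) E" unfolding D_level_eq_End_over by simp
    then have "linear_over ?M E" by (intro linear_over_gen_field linear_over_Un Ej)
    then show "E \<in> End_over ?M" by simp
  next
    fix E assume "E \<in> End_over ?M"
    then have EM: "linear_over ?M E" by simp
    have "tower_of p \<D> i \<subseteq> ?M" "frob_pow p j \<subseteq> ?M" using gen_field_upper by blast+
    then have "linear_over (tower_of p \<D> i) E" "linear_over (frob_pow p j) E"
      using linear_over_mono EM by blast+
    then have "E \<in> \<D>" "E \<in> End_over (frob_pow p j)"
      using D_level_eq_End_over[of i] unfolding D_level_eq_Int_End_over by auto
    then show "E \<in> D_level p \<D> j" unfolding D_level_eq_Int_End_over by (rule IntI)
  qed
  moreover obtain G where "finite G" "fspan ?M G = UNIV"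
    using finite_fspan_over_frob_pow[OF subfield_gen_field order_trans[OF Un_upper2 gen_field_upper]]
    by blast
  ultimately show "tower_of p \<D> j = ?M"
    unfolding tower_of_eq_centralizer using centralizer_End_over[OF subfield_gen_field] by simp
qed

lemma Diff_tower_tower_of:
  assumes "\<D> \<subseteq> Diff (perfect_core p)"
  shows "Diff_tower (tower_of p \<D>) = \<D>"
proof -
  have Diff_tower_of: "Diff (tower_of p \<D> n) = D_level p \<D> n" for n
    using Diff_eq_End_over[OF char prime fin_gen frob_pow_subset_tower_of] D_level_eq_End_over by simp
  have "\<D> \<subseteq> Diff_tower (tower_of p \<D>)"
    using assms Diff_perfect_core_ex_frob_pow
    unfolding Diff_tower_def Diff_tower_of D_level_def by blast
  then show ?thesis unfolding Diff_tower_def Diff_tower_of D_level_def by blast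
qed

lemma same_dim_D_level:
  "same_dim UNIV (\<lambda>c E. mult_op c \<circ> E) (D_level p \<D> i) (tower_of p \<D> i) (\<lambda>c x. c * x) UNIV"
proof -
  obtain G where "finite G" "fspan (tower_of p \<D> i) G = UNIV"
    using finite_fspan_over_frob_pow[OF subfield_tower_of frob_pow_subset_tower_of] by blast
  then show ?thesis
    unfolding D_level_eq_End_over by (rule same_dim_End_over[OF subfield_tower_of])
qed

end

end

theorem mainTheorem5:
  fixes p :: nat
  assumes "CHAR('a::field) = p" and "p > 0"
    and "fin_gen_over (perfect_core p :: 'a set)"
  shows "(\<forall>W::nat \<Rightarrow> 'a set. power_tower p W \<longrightarrow>
            K_subalgebra (Diff_tower W) \<and> Diff_tower W \<subseteq> Diff (perfect_core p) \<and>
            tower_of p (Diff_tower W) = W)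
       \<and> (\<forall>\<D>::('a \<Rightarrow> 'a) set. K_subalgebra \<D> \<and> \<D> \<subseteq> Diff (perfect_core p) \<longrightarrow>
            power_tower p (tower_of p \<D>) \<and> Diff_tower (tower_of p \<D>) = \<D>)
       \<and> (\<forall>\<D>::('a \<Rightarrow> 'a) set. K_subalgebra \<D> \<and> \<D> \<subseteq> Diff (perfect_core p) \<longrightarrow>
            (\<forall>i. same_dim (UNIV::'a set) (\<lambda>c E. mult_op c \<circ> E) (D_level p \<D> i)
                           (tower_of p \<D> i) (\<lambda>c x. c * x) (UNIV::'a set)))"
proof -
  have "prime p" using prime_CHAR_semidom[where 'a='a] assms(1,2) by simp
  note hyps = assms(1) this assms(3)
  show ?thesis
  proof (intro conjI allI impI)
    fix W :: "nat \<Rightarrow> 'a set" assume "power_tower p W"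
    note tower = hyps this
    show "K_subalgebra (Diff_tower W)" by (rule K_subalgebra_Diff_tower[OF tower])
    show "Diff_tower W \<subseteq> Diff (perfect_core p)" by (rule Diff_tower_subset_Diff_perfect_core[OF tower])
    show "tower_of p (Diff_tower W) = W" by (rule tower_of_Diff_tower[OF tower])
  next
    fix \<D> :: "('a \<Rightarrow> 'a) set" and i assume "K_subalgebra \<D> \<and> \<D> \<subseteq> Diff (perfect_core p)"
    then have alg: "K_subalgebra \<D>" and diff: "\<D> \<subseteq> Diff (perfect_core p)" by simp_all
    show "power_tower p (tower_of p \<D>)" by (rule power_tower_tower_of[OF hyps alg])
    show "Diff_tower (tower_of p \<D>) = \<D>" by (rule Diff_tower_tower_of[OF hyps alg diff])
    show "same_dim UNIV (\<lambda>c E. mult_op c \<circ> E) (D_level p \<D> i) (tower_of p \<D> i) (\<lambda>c x. c * x) UNIV"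
      by (rule same_dim_D_level[OF hyps alg])
  qed
qed

end
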